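(* Let $a \geq 0$ be a constant. If a function $f:(0,\infty) \to [0,\infty)$ satisfies $$\max\{f(x+y), a\} = \max\{f(x), f(y)\}$$ for all $x,y > 0$, then $f(z) = f(1) \geq a$ for every $z>0$. *)

theory Defs
  imports Complex_Main
begin

end

theory Submission
  imports Defs
begin

text \<open>Taking \<open>x = y\<close> gives \<open>max (f (2x)) a = f x\<close>, so \<open>f \<ge> a\<close> everywhere and the
  equation reduces to \<open>f (x + y) = max (f x) (f y)\<close>. Such an \<open>f\<close> is monotone and satisfies
  \<open>f (n x) = f x\<close>; comparing any \<open>z\<close> with a multiple of \<open>1\<close> and \<open>1\<close> with a multiple of \<open>z\<close>
  (Archimedes) forces \<open>f z = f 1\<close>.\<close>

lemma max_additive_mono:
  fixes f :: "'a::linordered_idom \<Rightarrow> 'b::linorder"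
  assumes add: "\<And>x y. x > 0 \<Longrightarrow> y > 0 \<Longrightarrow> f (x + y) = max (f x) (f y)"
    and "0 < x" "x \<le> y"
  shows "f x \<le> f y"
proof (cases "x = y")
  case False
  with assms(2,3) have "f y = max (f x) (f (y - x))"
    using add[of x "y - x"] by simp
  then show ?thesis by simp
qed simp

lemma max_additive_of_nat_mult:
  fixes f :: "'a::linordered_idom \<Rightarrow> 'b::linorder"
  assumes add: "\<And>x y. x > 0 \<Longrightarrow> y > 0 \<Longrightarrow> f (x + y) = max (f x) (f y)"
    and x: "x > 0" and n: "n > 0"
  shows "f (of_nat n * x) = f x"
  using n
proof (induction n rule: nat_induct_non_zero)
  case (Suc n)
  have "f (of_nat (Suc n) * x) = f (of_nat n * x + x)"
    by (simp add: algebra_simps)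
  also have "\<dots> = max (f (of_nat n * x)) (f x)"
    using add Suc.hyps x by simp
  finally show ?case using Suc.IH by simp
qed simp

lemma max_additive_const:
  fixes f :: "'a::{linordered_field, archimedean_field} \<Rightarrow> 'b::linorder"
  assumes add: "\<And>x y. x > 0 \<Longrightarrow> y > 0 \<Longrightarrow> f (x + y) = max (f x) (f y)"
    and x: "x > 0" and y: "y > 0"
  shows "f x = f y"
proof -
  have le: "f u \<le> f v" if "u > 0" "v > 0" for u v
  proof -
    obtain n :: nat where n: "u / v < of_nat n"
      using reals_Archimedean2 by blast
    have "0 < u / v" using that by simp
    with n have n_pos: "n > 0" by (auto intro: Nat.gr0I)
    from n that have u_le: "u \<le> of_nat n * v"
      by (simp add: pos_divide_less_eq)
    have "f u \<le> f (of_nat n * v)"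
      using max_additive_mono[of f, OF add \<open>u > 0\<close> u_le] .
    also have "\<dots> = f v"
      using max_additive_of_nat_mult[of f, OF add \<open>v > 0\<close> n_pos] .
    finally show ?thesis .
  qed
  from le[OF x y] le[OF y x] show ?thesis by simp
qed

theorem lemma2p1:
  fixes f :: "real \<Rightarrow> real" and a :: real
  assumes a_nonneg: "a \<ge> 0"
    and f_nonneg: "\<And>x. x > 0 \<Longrightarrow> f x \<ge> 0"
    and feq: "\<And>x y. x > 0 \<Longrightarrow> y > 0 \<Longrightarrow> max (f (x + y)) a = max (f x) (f y)"
  shows "\<forall>z>0. f z = f 1 \<and> f 1 \<ge> a"
proof -
  have ge_a: "f x \<ge> a" if "x > 0" for x
    using feq[OF that that] by (metis max.cobounded2 max.idem)
  have add: "f (x + y) = max (f x) (f y)" if "x > 0" "y > 0" for x y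
    using feq[OF that] ge_a[of "x + y"] that by (simp add: max_def)
  show ?thesis
    using max_additive_const[of f, OF add _ zero_less_one] ge_a[OF zero_less_one] by blast
qed

end
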